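(* For every $d\ge 3$, $\mu_t(\mathit{CCC}_d)=0$; that is, the only total mutual-visibility set of $\mathit{CCC}_d$ is the empty set.
   Context: Binary strings $x=x_0\cdots x_{d-1}$ have positions $0,\dots,d-1$ from the left; $x(i)$ is $x$ with bit $i$ complemented. $\mathit{CCC}_d$ ($d\ge 3$) has vertex set $\{[\ell,x]:\ell\in\{0,\dots,d-1\},\ x\in\{0,1\}^d\}$; $[\ell,x]$ and $[\ell',x']$ are adjacent iff either $x=x'$ and $\ell'\equiv\ell\pm1\pmod d$, or $\ell=\ell'$ and $x'=x(\ell)$. For a connected graph $G$ and $X\subseteq V(G)$, two vertices $x,y$ are $X$-visible if some shortest $x,y$-path has no internal vertex in $X$. $X$ is a total mutual-visibility set if every two vertices of $V(G)$ are $X$-visible; $\mu_t(G)$ is the maximum size of a total mutual-visibility set. *)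

theory Defs
  imports Main
begin

(* A graph is given by a vertex set V and an adjacency relation adj (assumed symmetric). *)

definition is_walk :: "'a set \<Rightarrow> ('a \<Rightarrow> 'a \<Rightarrow> bool) \<Rightarrow> 'a list \<Rightarrow> 'a \<Rightarrow> 'a \<Rightarrow> bool" where
  "is_walk V adj p x y \<longleftrightarrow> p \<noteq> [] \<and> hd p = x \<and> last p = y \<and> set p \<subseteq> V \<and>
     (\<forall>i. Suc i < length p \<longrightarrow> adj (p ! i) (p ! Suc i))"

definition gdist :: "'a set \<Rightarrow> ('a \<Rightarrow> 'a \<Rightarrow> bool) \<Rightarrow> 'a \<Rightarrow> 'a \<Rightarrow> nat" where
  "gdist V adj x y = (LEAST n. \<exists>p. is_walk V adj p x y \<and> length p = Suc n)"

definition is_shortest_path :: "'a set \<Rightarrow> ('a \<Rightarrow> 'a \<Rightarrow> bool) \<Rightarrow> 'a list \<Rightarrow> 'a \<Rightarrow> 'a \<Rightarrow> bool" where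
  "is_shortest_path V adj p x y \<longleftrightarrow> is_walk V adj p x y \<and> length p = Suc (gdist V adj x y)"

definition internal :: "'a list \<Rightarrow> 'a set" where
  "internal p = set (butlast (tl p))"

definition X_visible :: "'a set \<Rightarrow> ('a \<Rightarrow> 'a \<Rightarrow> bool) \<Rightarrow> 'a set \<Rightarrow> 'a \<Rightarrow> 'a \<Rightarrow> bool" where
  "X_visible V adj X x y \<longleftrightarrow> (\<exists>p. is_shortest_path V adj p x y \<and> internal p \<inter> X = {})"

definition total_mv_set :: "'a set \<Rightarrow> ('a \<Rightarrow> 'a \<Rightarrow> bool) \<Rightarrow> 'a set \<Rightarrow> bool" where
  "total_mv_set V adj X \<longleftrightarrow> X \<subseteq> V \<and> (\<forall>x\<in>V. \<forall>y\<in>V. X_visible V adj X x y)"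

definition mu_t :: "'a set \<Rightarrow> ('a \<Rightarrow> 'a \<Rightarrow> bool) \<Rightarrow> nat" where
  "mu_t V adj = Max {card X | X. total_mv_set V adj X}"

(* Cube-connected cycles CCC_d: vertices [l, x] with l < d and x a binary string of length d
   (positions 0..d-1 from the left). *)
definition CCC_V :: "nat \<Rightarrow> (nat \<times> bool list) set" where
  "CCC_V d = {(l, x). l < d \<and> length x = d}"

definition CCC_adj :: "nat \<Rightarrow> nat \<times> bool list \<Rightarrow> nat \<times> bool list \<Rightarrow> bool" where
  "CCC_adj d v w \<longleftrightarrow> (case v of (l, x) \<Rightarrow> case w of (l', x') \<Rightarrow>
     (x = x' \<and> (l' = (l + 1) mod d \<or> l = (l' + 1) mod d)) \<or>
     (l = l' \<and> x' = x[l := \<not> x ! l]))"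

end

theory Submission
  imports Defs
begin

text \<open>Every vertex v = [\<ell>, x] is the middle vertex of the path [\<ell>, x(\<ell>)] -- v -- [\<ell>+1, x],
  whose end vertices are distinct, nonadjacent and have v as their only common neighbour. So they
  are at distance 2, every shortest path between them has v as its internal vertex, and v lies in
  no total mutual-visibility set. The empty set is one since CCC_d is connected: walking around
  the cycles and along the cube edges reaches every vertex.\<close>

abbreviation adj_on :: "'a set \<Rightarrow> ('a \<Rightarrow> 'a \<Rightarrow> bool) \<Rightarrow> 'a \<Rightarrow> 'a \<Rightarrow> bool" where
  "adj_on V adj a b \<equiv> adj a b \<and> a \<in> V \<and> b \<in> V"

lemma is_walk_snoc:
  assumes "is_walk V adj p a b" "adj b c" "c \<in> V"
  shows "is_walk V adj (p @ [c]) a c"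
proof -
  have ne: "p \<noteq> []" and last: "last p = b"
    and steps: "\<forall>i. Suc i < length p \<longrightarrow> adj (p ! i) (p ! Suc i)"
    using assms(1) unfolding is_walk_def by auto
  have "adj ((p @ [c]) ! i) ((p @ [c]) ! Suc i)" if i: "Suc i < length (p @ [c])" for i
  proof (cases "Suc i < length p")
    case True
    then show ?thesis using steps by (simp add: nth_append)
  next
    case False
    then have "Suc i = length p" using i by simp
    moreover from this have "p ! i = b" using last ne by (metis diff_Suc_1 last_conv_nth)
    ultimately show ?thesis using assms(2) by (simp add: nth_append)
  qed
  then show ?thesis using assms unfolding is_walk_def by auto
qed

lemma is_walk_if_rtranclp:
  assumes "(adj_on V adj)\<^sup>*\<^sup>* a b" "a \<in> V"
  shows "\<exists>p. is_walk V adj p a b"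
  using assms(1)
proof (induction rule: rtranclp_induct)
  case base
  have "is_walk V adj [a] a a" using assms(2) unfolding is_walk_def by auto
  then show ?case by blast
next
  case (step b c)
  then obtain p where "is_walk V adj p a b" by blast
  then have "is_walk V adj (p @ [c]) a c" using is_walk_snoc[of V adj p a b c] step.hyps(2) by simp
  then show ?case ..
qed

lemma shortest_path_exists:
  assumes "is_walk V adj p x y"
  shows "\<exists>q. is_shortest_path V adj q x y"
proof -
  have "length p = Suc (length p - 1)" using assms unfolding is_walk_def by simp
  then have "\<exists>n q. is_walk V adj q x y \<and> length q = Suc n" using assms by blast
  then show ?thesis unfolding gdist_def is_shortest_path_def by (rule LeastI_ex)
qed

lemma total_mv_set_empty:
  assumes "\<And>x y. x \<in> V \<Longrightarrow> y \<in> V \<Longrightarrow> \<exists>p. is_walk V adj p x y"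
  shows "total_mv_set V adj {}"
proof -
  have "X_visible V adj {} x y" if "x \<in> V" "y \<in> V" for x y
    using shortest_path_exists assms[OF that] unfolding X_visible_def by auto
  then show ?thesis unfolding total_mv_set_def by simp
qed

lemma is_walk_length_le_2:
  assumes "is_walk V adj q x y" "length q \<le> 2"
  shows "x = y \<or> adj x y"
proof -
  have "q \<noteq> []" using assms(1) unfolding is_walk_def by simp
  with assms(2) consider a where "q = [a]" | a b where "q = [a, b]"
    by (cases q; cases "tl q") auto
  then show ?thesis using assms(1) unfolding is_walk_def by cases auto
qed

lemma gdist_eq_2:
  assumes "x \<noteq> y" "\<not> adj x y" "adj x v" "adj v y" "x \<in> V" "v \<in> V" "y \<in> V"
  shows "gdist V adj x y = 2"
  unfolding gdist_def
proof (rule Least_equality)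
  have "is_walk V adj [x, v, y] x y"
    using assms unfolding is_walk_def by (auto simp: less_Suc_eq nth_Cons')
  then show "\<exists>p. is_walk V adj p x y \<and> length p = Suc 2" by fastforce
next
  fix n assume "\<exists>p. is_walk V adj p x y \<and> length p = Suc n"
  then obtain q where "is_walk V adj q x y" "length q = Suc n" by blast
  then show "2 \<le> n" using is_walk_length_le_2[of V adj q x y] assms(1,2) by linarith
qed

lemma shortest_path_through_unique_midpoint:
  assumes "x \<noteq> y" "\<not> adj x y" "adj x v" "adj v y" "x \<in> V" "v \<in> V" "y \<in> V"
    and unique: "\<And>b. adj x b \<Longrightarrow> adj b y \<Longrightarrow> b = v"
    and p: "is_shortest_path V adj p x y"
  shows "internal p = {v}"
proof -
  have "length p = 3"
    using p gdist_eq_2[OF assms(1-7)] unfolding is_shortest_path_def by simp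
  then obtain a b c where p_eq: "p = [a, b, c]"
    by (cases p; cases "tl p"; cases "tl (tl p)") auto
  then have "adj x b" "adj b y"
    using p unfolding is_shortest_path_def is_walk_def by (auto simp: nth_Cons')
  then show ?thesis using unique p_eq unfolding internal_def by simp
qed

lemma not_X_visible_through_unique_midpoint:
  assumes "x \<noteq> y" "\<not> adj x y" "adj x v" "adj v y" "x \<in> V" "v \<in> V" "y \<in> V"
    and "\<And>b. adj x b \<Longrightarrow> adj b y \<Longrightarrow> b = v"
    and "v \<in> X"
  shows "\<not> X_visible V adj X x y"
proof
  assume "X_visible V adj X x y"
  then obtain p where "is_shortest_path V adj p x y" "internal p \<inter> X = {}"
    unfolding X_visible_def by blast
  then show False using shortest_path_through_unique_midpoint[OF assms(1-8)] assms(9) by simp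
qed

lemma Suc_mod_neq:
  assumes "l < d" "2 \<le> d"
  shows "Suc l mod d \<noteq> l"
proof (cases "Suc l < d")
  case False
  then have "Suc l = d" using assms by simp
  then show ?thesis using assms by auto
qed simp

abbreviation flip :: "bool list \<Rightarrow> nat \<Rightarrow> bool list" where
  "flip x i \<equiv> x[i := \<not> x ! i]"

context
  fixes d :: nat
  assumes d_ge_2: "2 \<le> d"
begin

lemma CCC_reach_level_shift:
  assumes "length x = d" "l < d"
  shows "(adj_on (CCC_V d) (CCC_adj d))\<^sup>*\<^sup>* (l, x) ((l + k) mod d, x)"
proof (induction k)
  case (Suc k)
  have "adj_on (CCC_V d) (CCC_adj d) ((l + k) mod d, x) ((l + Suc k) mod d, x)"
    using assms d_ge_2 by (auto simp: CCC_adj_def CCC_V_def mod_Suc_eq)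
  with Suc.IH show ?case by (rule rtranclp.rtrancl_into_rtrancl)
qed (use assms in simp)

lemma CCC_reach_level:
  assumes "length x = d" "l < d" "l' < d"
  shows "(adj_on (CCC_V d) (CCC_adj d))\<^sup>*\<^sup>* (l, x) (l', x)"
proof -
  have "(l + (l' + d - l)) mod d = l'" using assms by simp
  then show ?thesis using CCC_reach_level_shift[OF assms(1,2), of "l' + d - l"] by simp
qed

lemma CCC_reach_update:
  assumes "length x = d" "l < d"
  shows "(adj_on (CCC_V d) (CCC_adj d))\<^sup>*\<^sup>* (l, x) (l, x[l := b])"
proof (cases "x ! l = b")
  case True
  then show ?thesis using list_update_id[of x l] by simp
next
  case False
  then have "x[l := b] = flip x l" by auto
  moreover have "adj_on (CCC_V d) (CCC_adj d) (l, x) (l, flip x l)"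
    using assms by (auto simp: CCC_adj_def CCC_V_def)
  ultimately show ?thesis by auto
qed

lemma CCC_reach_prefix:
  assumes "length x = d" "length y = d" "k \<le> d"
  shows "(adj_on (CCC_V d) (CCC_adj d))\<^sup>*\<^sup>* (0, x) (0, take k y @ drop k x)"
  using assms(3)
proof (induction k)
  case (Suc k)
  define z where "z = take k y @ drop k x"
  have z: "length z = d" "k < d" using assms Suc.prems unfolding z_def by auto
  have "(adj_on (CCC_V d) (CCC_adj d))\<^sup>*\<^sup>* (0, x) (0, z)"
    using Suc unfolding z_def by simp
  also have "(adj_on (CCC_V d) (CCC_adj d))\<^sup>*\<^sup>* (0, z) (k, z)"
    using CCC_reach_level z by simp
  also have "(adj_on (CCC_V d) (CCC_adj d))\<^sup>*\<^sup>* (k, z) (k, z[k := y ! k])"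
    using CCC_reach_update z by simp
  also have "(adj_on (CCC_V d) (CCC_adj d))\<^sup>*\<^sup>* (k, z[k := y ! k]) (0, z[k := y ! k])"
    using CCC_reach_level z by simp
  also have "z[k := y ! k] = take (Suc k) y @ drop (Suc k) x"
    using assms z unfolding z_def
    by (simp add: take_Suc_conv_app_nth Cons_nth_drop_Suc[symmetric] list_update_append)
  finally show ?case .
qed simp

lemma CCC_connected:
  assumes "a \<in> CCC_V d" "b \<in> CCC_V d"
  shows "(adj_on (CCC_V d) (CCC_adj d))\<^sup>*\<^sup>* a b"
proof -
  obtain l x l' y where a: "a = (l, x)" "l < d" "length x = d"
    and b: "b = (l', y)" "l' < d" "length y = d"
    using assms by (auto simp: CCC_V_def)
  have "(adj_on (CCC_V d) (CCC_adj d))\<^sup>*\<^sup>* (l, x) (0, x)"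
    using CCC_reach_level a by simp
  also have "(adj_on (CCC_V d) (CCC_adj d))\<^sup>*\<^sup>* (0, x) (0, y)"
    using CCC_reach_prefix[OF a(3) b(3), of d] a b by simp
  also have "(adj_on (CCC_V d) (CCC_adj d))\<^sup>*\<^sup>* (0, y) (l', y)"
    using CCC_reach_level b by simp
  finally show ?thesis using a b by simp
qed

lemma CCC_unique_midpoint:
  assumes v: "(l, x) \<in> CCC_V d"
  defines "u \<equiv> (l, flip x l)" and "w \<equiv> (Suc l mod d, x)"
  shows "u \<noteq> w" "\<not> CCC_adj d u w" "CCC_adj d u (l, x)" "CCC_adj d (l, x) w"
    "u \<in> CCC_V d" "w \<in> CCC_V d"
    "\<And>b. CCC_adj d u b \<Longrightarrow> CCC_adj d b w \<Longrightarrow> b = (l, x)"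
proof -
  have lx: "l < d" "length x = d" using v by (auto simp: CCC_V_def)
  have levels: "Suc l mod d \<noteq> l" using Suc_mod_neq lx d_ge_2 by simp
  have flip_ne: "flip x l \<noteq> x" using lx
    by (metis list_update_same_conv nth_list_update_eq)
  show "u \<noteq> w" "\<not> CCC_adj d u w"
    using levels flip_ne by (auto simp: u_def w_def CCC_adj_def)
  show "CCC_adj d u (l, x)" "CCC_adj d (l, x) w" "u \<in> CCC_V d" "w \<in> CCC_V d"
    using lx by (auto simp: u_def w_def CCC_adj_def CCC_V_def mod_Suc_eq)
  fix b assume ub: "CCC_adj d u b" and bw: "CCC_adj d b w"
  obtain l2 z where b: "b = (l2, z)" by (cases b)
  show "b = (l, x)"
  proof (cases "z = flip x l")
    case True
    \<comment> \<open>b has the string of u, so the edge b -- w is the cube edge at level l + 1;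
      but x and flip x l differ at position l\<close>
    then have "l2 = Suc l mod d" "x = flip z l2"
      using bw flip_ne unfolding b w_def CCC_adj_def by auto
    then have "x ! l = z ! l" using levels by simp
    then show ?thesis using True lx by simp
  next
    case False
    then show ?thesis using ub lx unfolding b u_def CCC_adj_def by auto
  qed
qed

lemma CCC_total_mv_set_iff: "total_mv_set (CCC_V d) (CCC_adj d) X \<longleftrightarrow> X = {}"
proof
  assume X: "total_mv_set (CCC_V d) (CCC_adj d) X"
  show "X = {}"
  proof (rule ccontr)
    assume "X \<noteq> {}"
    then obtain l x where v: "(l, x) \<in> X" "(l, x) \<in> CCC_V d"
      using X unfolding total_mv_set_def by auto
    note mid = CCC_unique_midpoint[OF v(2)]
    have "X_visible (CCC_V d) (CCC_adj d) X (l, flip x l) (Suc l mod d, x)"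
      using X mid(5,6) unfolding total_mv_set_def by blast
    then show False
      using not_X_visible_through_unique_midpoint[OF mid(1-5) v(2) mid(6,7) v(1)] by blast
  qed
next
  assume "X = {}"
  have "\<exists>p. is_walk (CCC_V d) (CCC_adj d) p a b" if "a \<in> CCC_V d" "b \<in> CCC_V d" for a b
    using is_walk_if_rtranclp[OF CCC_connected[OF that] that(1)] .
  then show "total_mv_set (CCC_V d) (CCC_adj d) X"
    unfolding \<open>X = {}\<close> by (rule total_mv_set_empty)
qed

end

theorem corollary4p5:
  fixes d :: nat
  assumes "d \<ge> 3"
  shows "mu_t (CCC_V d) (CCC_adj d) = 0 \<and>
         (\<forall>X. total_mv_set (CCC_V d) (CCC_adj d) X \<longleftrightarrow> X = {})"
proof -
  have tmv_iff: "total_mv_set (CCC_V d) (CCC_adj d) X \<longleftrightarrow> X = {}" for X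
    using CCC_total_mv_set_iff assms by simp
  then have "{card X | X. total_mv_set (CCC_V d) (CCC_adj d) X} = {0}" by auto
  then show ?thesis using tmv_iff unfolding mu_t_def by simp
qed

end
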